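(* (1) $\mathcal{K}^{\mathsf{TS}}(\overline{K_n})=\{k:k\ge1\}$ for $n\ge2$. (2) $\mathcal{K}^{\mathsf{TS}}(\overline{K_{1,1}})=\{k:k\ge1\}$ and $\mathcal{K}^{\mathsf{TS}}(\overline{K_{1,n}})=\{1,n-1\}$ for $n\ge2$. (3) For $2\le m\le n$: $\mathcal{K}^{\mathsf{TS}}(\overline{K_{m,n}})=\{1,n-1\}$ if $m=n$, and $=\{1\}$ if $m<n$. (4) $\mathcal{K}^{\mathsf{TS}}(\overline{B_1})=\{k:k\ge1\}$ and $\mathcal{K}^{\mathsf{TS}}(\overline{B_p})=\{1,p-1\}$ for $p\ge2$. (5) $\mathcal{K}^{\mathsf{TS}}(\overline{P_n})=\{1\}$ for $n\ge3$. (6) $\mathcal{K}^{\mathsf{TS}}(\overline{C_n})=\{1\}$ for $n\ge4$. (7) $\mathcal{K}^{\mathsf{TS}}(\overline{F_1})=\{k:k\ge1\}$, $\mathcal{K}^{\mathsf{TS}}(\overline{F_2})=\{1\}$, $\mathcal{K}^{\mathsf{TS}}(\overline{F_3})=\{1,2\}$, and $\mathcal{K}^{\mathsf{TS}}(\overline{F_p})=\{1\}$ for $p\ge4$.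
   Context: All graphs are finite, simple, undirected; $\overline{G}$ denotes the complement of $G$. A $k$-clique of a graph $H$ is a set of $k$ pairwise adjacent vertices. For a graph $H$ and integer $k\ge1$, the Token Sliding graph $\mathsf{TS}_k(H)$ has as vertices the $k$-cliques of $H$, and two $k$-cliques $A,B$ are adjacent iff $A\setminus B=\{u\}$, $B\setminus A=\{v\}$ for some vertices $u,v$ with $uv\in E(H)$. For a graph $G$, $\mathcal{K}^{\mathsf{TS}}(G)=\{k\ge1:\ \exists H,\ \mathsf{TS}_k(H)\cong G\}$. $K_n$, $P_n$, $C_n$ denote the complete graph, path, cycle on $n$ vertices; $K_{m,n}$ the complete bipartite graph. The book graph $B_p$ consists of $p$ triangles sharing a common edge; the friendship graph $F_p$ consists of $p$ triangles sharing a common vertex. *)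

theory Defs
  imports Main
begin

type_synonym 'a graph = "'a set \<times> 'a set set"

definition verts :: "'a graph \<Rightarrow> 'a set" where "verts G = fst G"
definition edges :: "'a graph \<Rightarrow> 'a set set" where "edges G = snd G"

definition is_graph :: "'a graph \<Rightarrow> bool" where
  "is_graph G \<longleftrightarrow> finite (verts G) \<and>
     (\<forall>e\<in>edges G. \<exists>u v. u \<in> verts G \<and> v \<in> verts G \<and> u \<noteq> v \<and> e = {u, v})"

definition mk_graph :: "'a set \<Rightarrow> ('a \<Rightarrow> 'a \<Rightarrow> bool) \<Rightarrow> 'a graph" where
  "mk_graph V R = (V, {{u, v} | u v. u \<in> V \<and> v \<in> V \<and> u \<noteq> v \<and> R u v})"

definition complement :: "'a graph \<Rightarrow> 'a graph" where
  "complement G = mk_graph (verts G) (\<lambda>u v. {u, v} \<notin> edges G)"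

definition graph_iso :: "'a graph \<Rightarrow> 'b graph \<Rightarrow> bool" where
  "graph_iso G G' \<longleftrightarrow> (\<exists>f. bij_betw f (verts G) (verts G') \<and>
     (\<forall>u\<in>verts G. \<forall>v\<in>verts G. {u, v} \<in> edges G \<longleftrightarrow> {f u, f v} \<in> edges G'))"

definition cliques :: "nat \<Rightarrow> 'a graph \<Rightarrow> 'a set set" where
  "cliques k H = {A. A \<subseteq> verts H \<and> card A = k \<and> finite A \<and>
      (\<forall>u\<in>A. \<forall>v\<in>A. u \<noteq> v \<longrightarrow> {u, v} \<in> edges H)}"

definition TS :: "nat \<Rightarrow> 'a graph \<Rightarrow> 'a set graph" where
  "TS k H = (cliques k H,
     {{A, B} | A B. A \<in> cliques k H \<and> B \<in> cliques k H \<and>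
        (\<exists>u v. A - B = {u} \<and> B - A = {v} \<and> {u, v} \<in> edges H)})"

text \<open>K^TS(G). The host graph H ranges over all finite simple graphs; every such graph
is isomorphic to one with vertices in nat, so H is taken with vertex type nat.\<close>
definition KTS :: "'b graph \<Rightarrow> nat set" where
  "KTS G = {k. k \<ge> 1 \<and> (\<exists>H :: nat graph. is_graph H \<and> graph_iso (TS k H) G)}"

definition complete_graph :: "nat \<Rightarrow> nat graph" where
  "complete_graph n = mk_graph {0..<n} (\<lambda>u v. True)"

definition complete_bipartite :: "nat \<Rightarrow> nat \<Rightarrow> nat graph" where
  "complete_bipartite m n = mk_graph {0..<m+n} (\<lambda>u v. (u < m \<and> m \<le> v) \<or> (v < m \<and> m \<le> u))"

definition path_graph :: "nat \<Rightarrow> nat graph" where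
  "path_graph n = mk_graph {0..<n} (\<lambda>u v. v = u + 1 \<or> u = v + 1)"

definition cycle_graph :: "nat \<Rightarrow> nat graph" where
  "cycle_graph n = mk_graph {0..<n} (\<lambda>u v. v = (u + 1) mod n \<or> u = (v + 1) mod n)"

text \<open>Book B_p: spine edge {0,1}, pages 2..p+1 each adjacent to 0 and 1.\<close>
definition book_graph :: "nat \<Rightarrow> nat graph" where
  "book_graph p = mk_graph {0..<p+2} (\<lambda>u v. u \<in> {0,1} \<or> v \<in> {0,1})"

text \<open>Friendship F_p: centre 0, triangles {0, 2i-1, 2i} for i = 1..p.\<close>
definition friendship_graph :: "nat \<Rightarrow> nat graph" where
  "friendship_graph p = mk_graph {0..2*p}
     (\<lambda>u v. u = 0 \<or> v = 0 \<or> (odd u \<and> v = u + 1) \<or> (odd v \<and> u = v + 1))"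

end

theory Submission
  imports Defs
begin

lemma verts_mk_graph [simp]: "verts (mk_graph V R) = V"
  by (simp add: verts_def mk_graph_def)

lemma edges_mk_graph:
  "{u, v} \<in> edges (mk_graph V R) \<longleftrightarrow> u \<in> V \<and> v \<in> V \<and> u \<noteq> v \<and> (R u v \<or> R v u)"
  unfolding edges_def mk_graph_def by (auto simp: doubleton_eq_iff)

lemma singleton_notin_edges_mk_graph: "{x} \<notin> edges (mk_graph V R)"
  using edges_mk_graph[of x x V R] by simp

lemma mk_graph_cong:
  assumes "\<And>u v. u \<in> V \<Longrightarrow> v \<in> V \<Longrightarrow> u \<noteq> v \<Longrightarrow> R u v \<or> R v u \<longleftrightarrow> S u v \<or> S v u"
  shows "mk_graph V R = mk_graph V S"
  unfolding mk_graph_def using assms by (auto simp: doubleton_eq_iff) blast+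

lemma complement_mk_graph: "complement (mk_graph V R) = mk_graph V (\<lambda>u v. \<not> R u v \<and> \<not> R v u)"
  unfolding complement_def verts_mk_graph
  by (rule mk_graph_cong) (auto simp: edges_mk_graph insert_commute)

lemma is_graph_mk_graph: "finite V \<Longrightarrow> is_graph (mk_graph V R)"
  unfolding is_graph_def by (auto simp: edges_def mk_graph_def verts_def)

lemma verts_TS [simp]: "verts (TS k H) = cliques k H"
  by (simp add: TS_def verts_def)

lemma edges_TS:
  "{A, B} \<in> edges (TS k H) \<longleftrightarrow> A \<in> cliques k H \<and> B \<in> cliques k H \<and>
     (\<exists>u v. A - B = {u} \<and> B - A = {v} \<and> {u, v} \<in> edges H)"
  unfolding TS_def edges_def by (auto simp: doubleton_eq_iff insert_commute)

lemma singleton_notin_edges_TS: "{A} \<notin> edges (TS k H)"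
  using edges_TS[of A A k H] by simp

definition neighbours :: "'a graph \<Rightarrow> 'a \<Rightarrow> 'a set" where
  "neighbours G x = {y \<in> verts G. {x, y} \<in> edges G}"

definition degree :: "'a graph \<Rightarrow> 'a \<Rightarrow> nat" where
  "degree G x = card (neighbours G x)"

locale graph_isomorphism =
  fixes G :: "'a graph" and G' :: "'b graph" and f :: "'a \<Rightarrow> 'b"
  assumes bij: "bij_betw f (verts G) (verts G')"
    and edge_iff: "\<And>u v. u \<in> verts G \<Longrightarrow> v \<in> verts G \<Longrightarrow> {f u, f v} \<in> edges G' \<longleftrightarrow> {u, v} \<in> edges G"
begin

lemma inj: "inj_on f (verts G)"
  using bij by (rule bij_betw_imp_inj_on)

lemma image_verts: "f ` verts G = verts G'"
  using bij by (rule bij_betw_imp_surj_on)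

lemma image_in_cliques_iff:
  assumes "K \<subseteq> verts G"
  shows "f ` K \<in> cliques n G' \<longleftrightarrow> K \<in> cliques n G"
proof -
  have inj_K: "inj_on f K"
    using inj assms by (rule inj_on_subset)
  have "finite (f ` K) \<longleftrightarrow> finite K"
    using inj_K by (rule finite_image_iff)
  moreover have "card (f ` K) = card K"
    using inj_K by (rule card_image)
  moreover have "(\<forall>u'\<in>f ` K. \<forall>v'\<in>f ` K. u' \<noteq> v' \<longrightarrow> {u', v'} \<in> edges G') \<longleftrightarrow>
      (\<forall>u\<in>K. \<forall>v\<in>K. u \<noteq> v \<longrightarrow> {u, v} \<in> edges G)"
    using assms inj_K by (auto simp: edge_iff subsetD inj_on_eq_iff)
  ultimately show ?thesis
    using assms image_verts by (auto simp: cliques_def)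
qed

lemma cliques_eq: "cliques n G' = (image f) ` cliques n G"
proof (intro equalityI subsetI)
  fix K' assume K': "K' \<in> cliques n G'"
  define K where "K = {u \<in> verts G. f u \<in> K'}"
  have "K' = f ` K"
    using K' image_verts unfolding K_def cliques_def by auto
  moreover have "K \<in> cliques n G"
    using K' image_in_cliques_iff[of K n] unfolding \<open>K' = f ` K\<close> by (simp add: K_def)
  ultimately show "K' \<in> (image f) ` cliques n G"
    by blast
next
  fix K' assume "K' \<in> (image f) ` cliques n G"
  then obtain K where "K \<in> cliques n G" "K' = f ` K"
    by blast
  then show "K' \<in> cliques n G'"
    using image_in_cliques_iff[of K n] by (simp add: cliques_def)
qed

lemma image_eq_singleton_iff:
  assumes "X \<subseteq> verts G"
  shows "f ` X = {y} \<longleftrightarrow> (\<exists>x. X = {x} \<and> y = f x)"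
proof
  assume "f ` X = {y}"
  then obtain x where x: "x \<in> X" "y = f x"
    by (metis imageE insertI1)
  have "x' = x" if "x' \<in> X" for x'
    using \<open>f ` X = {y}\<close> x that assms inj by (metis imageI singletonD subsetD inj_on_eq_iff)
  then show "\<exists>x. X = {x} \<and> y = f x"
    using x by blast
qed auto

lemma neighbours_image:
  assumes "x \<in> verts G"
  shows "neighbours G' (f x) = f ` neighbours G x"
  using assms by (auto simp: neighbours_def edge_iff simp flip: image_verts)

lemma degree_image:
  assumes "x \<in> verts G"
  shows "degree G' (f x) = degree G x"
  unfolding degree_def neighbours_image[OF assms]
  by (rule card_image, rule inj_on_subset[OF inj]) (auto simp: neighbours_def)

lemma inverse: "graph_isomorphism G' G (inv_into (verts G) f)"
proof
  show "bij_betw (inv_into (verts G) f) (verts G') (verts G)"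
    using bij by (rule bij_betw_inv_into)
  fix u v assume "u \<in> verts G'" "v \<in> verts G'"
  then show "{inv_into (verts G) f u, inv_into (verts G) f v} \<in> edges G \<longleftrightarrow> {u, v} \<in> edges G'"
    using image_verts edge_iff by (metis f_inv_into_f inv_into_into)
qed

end

lemma graph_iso_iff_isomorphism: "graph_iso G G' \<longleftrightarrow> (\<exists>f. graph_isomorphism G G' f)"
  unfolding graph_iso_def graph_isomorphism_def by metis

lemma graph_isomorphism_comp:
  assumes "graph_isomorphism G G' f" "graph_isomorphism G' G'' g"
  shows "graph_isomorphism G G'' (g \<circ> f)"
proof -
  interpret f: graph_isomorphism G G' f by fact
  interpret g: graph_isomorphism G' G'' g by fact
  show ?thesis
  proof
    show "bij_betw (g \<circ> f) (verts G) (verts G'')"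
      using f.bij g.bij by (rule bij_betw_trans)
    fix u v assume "u \<in> verts G" "v \<in> verts G"
    moreover from this have "f u \<in> verts G'" "f v \<in> verts G'"
      using f.image_verts by blast+
    ultimately show "{(g \<circ> f) u, (g \<circ> f) v} \<in> edges G'' \<longleftrightarrow> {u, v} \<in> edges G"
      by (simp add: f.edge_iff g.edge_iff)
  qed
qed

lemma graph_iso_sym: "graph_iso G G' \<Longrightarrow> graph_iso G' G"
  unfolding graph_iso_iff_isomorphism using graph_isomorphism.inverse by blast

lemma graph_iso_trans: "graph_iso G G' \<Longrightarrow> graph_iso G' G'' \<Longrightarrow> graph_iso G G''"
  unfolding graph_iso_iff_isomorphism using graph_isomorphism_comp by blast

lemma graph_isomorphism_TS:
  assumes "graph_isomorphism H H' f"
  shows "graph_isomorphism (TS k H) (TS k H') (image f)"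
proof -
  interpret graph_isomorphism H H' f by fact
  have clique_verts: "A \<subseteq> verts H" if "A \<in> cliques k H" for A
    using that by (simp add: cliques_def)
  show ?thesis
  proof
    have "inj_on (image f) (cliques k H)"
      using inj clique_verts by (auto intro!: inj_onI simp: inj_on_image_eq_iff)
    then show "bij_betw (image f) (verts (TS k H)) (verts (TS k H'))"
      by (simp add: bij_betw_def cliques_eq)
    fix A B assume A: "A \<in> verts (TS k H)" and B: "B \<in> verts (TS k H)"
    then have "A - B \<subseteq> verts H" "B - A \<subseteq> verts H" "A \<subseteq> verts H" "B \<subseteq> verts H"
      by (auto dest: clique_verts)
    moreover from this have "f ` A - f ` B = f ` (A - B)" "f ` B - f ` A = f ` (B - A)"
      using inj_on_image_set_diff[OF inj] by auto
    ultimately have "(\<exists>u' v'. f ` A - f ` B = {u'} \<and> f ` B - f ` A = {v'} \<and> {u', v'} \<in> edges H') \<longleftrightarrow>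
          (\<exists>u v. A - B = {u} \<and> B - A = {v} \<and> {u, v} \<in> edges H)"
      by (auto simp: image_eq_singleton_iff edge_iff)
    then show "{f ` A, f ` B} \<in> edges (TS k H') \<longleftrightarrow> {A, B} \<in> edges (TS k H)"
      using A B clique_verts by (simp add: edges_TS image_in_cliques_iff)
  qed
qed

lemma ex_isomorphic_nat_graph:
  fixes H :: "'a graph"
  assumes "is_graph H"
  obtains H' :: "nat graph" where "is_graph H'" "graph_iso H H'"
proof -
  have "finite (verts H)"
    using assms by (simp add: is_graph_def)
  then obtain h :: "'a \<Rightarrow> nat" where h: "inj_on h (verts H)"
    using finite_imp_inj_to_nat_seg by blast
  define H' where "H' = (h ` verts H, (image h) ` edges H)"
  have verts': "verts H' = h ` verts H" and edges': "edges H' = (image h) ` edges H"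
    by (simp_all add: H'_def verts_def edges_def)
  have edge_verts: "e \<subseteq> verts H" if "e \<in> edges H" for e
    using assms that unfolding is_graph_def by fastforce
  have "graph_isomorphism H H' h"
  proof
    show "bij_betw h (verts H) (verts H')"
      using h by (simp add: bij_betw_def verts')
    fix u v assume uv: "u \<in> verts H" "v \<in> verts H"
    show "{h u, h v} \<in> edges H' \<longleftrightarrow> {u, v} \<in> edges H"
    proof
      assume "{h u, h v} \<in> edges H'"
      then obtain e where "e \<in> edges H" "h ` {u, v} = h ` e"
        unfolding edges' by auto
      moreover from this have "{u, v} = e"
        using inj_on_image_eq_iff[OF h, of "{u, v}" e] uv edge_verts by simp
      ultimately show "{u, v} \<in> edges H"
        by simp
    next
      assume "{u, v} \<in> edges H"
      then show "{h u, h v} \<in> edges H'"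
        unfolding edges' by (metis image_eqI image_empty image_insert)
    qed
  qed
  moreover have "is_graph H'"
    unfolding is_graph_def verts' edges'
  proof (intro conjI ballI)
    show "finite (h ` verts H)"
      using assms by (simp add: is_graph_def)
    fix e' assume "e' \<in> (image h) ` edges H"
    then obtain u v where "u \<in> verts H" "v \<in> verts H" "u \<noteq> v" "e' = {h u, h v}"
      using assms unfolding is_graph_def by auto
    then show "\<exists>a b. a \<in> h ` verts H \<and> b \<in> h ` verts H \<and> a \<noteq> b \<and> e' = {a, b}"
      using h by (metis image_eqI inj_on_contraD)
  qed
  ultimately show thesis
    using that unfolding graph_iso_iff_isomorphism by blast
qed

lemma KTS_intro:
  fixes H :: "'a graph"
  assumes "is_graph H" "1 \<le> k" "graph_iso (TS k H) G"
  shows "k \<in> KTS G"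
proof -
  obtain H' :: "nat graph" where H': "is_graph H'" "graph_iso H H'"
    using assms(1) by (rule ex_isomorphic_nat_graph)
  then have "graph_iso (TS k H') (TS k H)"
    using graph_isomorphism_TS graph_iso_sym unfolding graph_iso_iff_isomorphism by metis
  then have "graph_iso (TS k H') G"
    using assms(3) by (rule graph_iso_trans)
  then show ?thesis
    using H'(1) assms(2) unfolding KTS_def by blast
qed

lemma graph_isomorphism_TS_1:
  assumes "is_graph G"
  shows "graph_isomorphism G (TS 1 G) (\<lambda>v. {v})"
proof
  have "cliques 1 G = (\<lambda>v. {v}) ` verts G"
    unfolding cliques_def by (auto simp: card_Suc_eq)
  then show "bij_betw (\<lambda>v. {v}) (verts G) (verts (TS 1 G))"
    by (simp add: bij_betw_def)
  fix u v assume "u \<in> verts G" "v \<in> verts G"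
  then have "{u} \<in> cliques 1 G" "{v} \<in> cliques 1 G"
    by (simp_all add: cliques_def)
  moreover have "{u} \<notin> edges G"
    using assms unfolding is_graph_def by (metis doubleton_eq_iff insert_absorb2)
  ultimately show "{{u}, {v}} \<in> edges (TS 1 G) \<longleftrightarrow> {u, v} \<in> edges G"
    by (cases "u = v") (auto simp: edges_TS singleton_notin_edges_TS)
qed

lemma one_in_KTS: "is_graph G \<Longrightarrow> 1 \<in> KTS G"
  by (metis KTS_intro graph_isomorphism.inverse graph_isomorphism_TS_1 graph_iso_iff_isomorphism
      order_refl)


definition TS_block_system :: "nat \<Rightarrow> 'a graph \<Rightarrow> 'a set set \<Rightarrow> bool" where
  "TS_block_system k G Bs \<longleftrightarrow>
     Bs \<subseteq> cliques (Suc k) G \<and>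
     (\<forall>K\<in>Bs. \<forall>z\<in>verts G - K. card (neighbours G z \<inter> K) \<le> 2) \<and>
     (\<forall>x\<in>verts G. \<forall>y\<in>verts G. x \<noteq> y \<longrightarrow> {x, y} \<in> edges G \<longrightarrow> (\<exists>K\<in>Bs. x \<in> K \<and> y \<in> K)) \<and>
     (\<forall>K\<in>Bs. \<forall>K'\<in>Bs. \<forall>x y. x \<noteq> y \<longrightarrow> {x, y} \<subseteq> K \<inter> K' \<longrightarrow> K = K')"

lemma TS_block_systemI:
  assumes "Bs \<subseteq> cliques (Suc k) G"
    and "\<And>K z. K \<in> Bs \<Longrightarrow> z \<in> verts G - K \<Longrightarrow> card (neighbours G z \<inter> K) \<le> 2"
    and "\<And>x y. x \<in> verts G \<Longrightarrow> y \<in> verts G \<Longrightarrow> x \<noteq> y \<Longrightarrow> {x, y} \<in> edges G \<Longrightarrow>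
      \<exists>K\<in>Bs. x \<in> K \<and> y \<in> K"
    and "\<And>K K' x y. K \<in> Bs \<Longrightarrow> K' \<in> Bs \<Longrightarrow> x \<noteq> y \<Longrightarrow> {x, y} \<subseteq> K \<inter> K' \<Longrightarrow> K = K'"
  shows "TS_block_system k G Bs"
  using assms unfolding TS_block_system_def by (intro conjI ballI impI allI) auto

lemma TS_block_systemD:
  assumes "TS_block_system k G Bs"
  shows "Bs \<subseteq> cliques (Suc k) G"
    and "K \<in> Bs \<Longrightarrow> z \<in> verts G - K \<Longrightarrow> card (neighbours G z \<inter> K) \<le> 2"
    and "x \<in> verts G \<Longrightarrow> y \<in> verts G \<Longrightarrow> x \<noteq> y \<Longrightarrow> {x, y} \<in> edges G \<Longrightarrow>
      \<exists>K\<in>Bs. x \<in> K \<and> y \<in> K"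
    and "K \<in> Bs \<Longrightarrow> K' \<in> Bs \<Longrightarrow> x \<noteq> y \<Longrightarrow> {x, y} \<subseteq> K \<inter> K' \<Longrightarrow> K = K'"
  using assms unfolding TS_block_system_def by auto

definition TS_like :: "nat \<Rightarrow> 'a graph \<Rightarrow> bool" where
  "TS_like k G \<longleftrightarrow> (\<exists>Bs. TS_block_system k G Bs) \<and> (\<forall>x\<in>verts G. k dvd degree G x)"

definition facets :: "'a set \<Rightarrow> 'a set set" where
  "facets S = (\<lambda>x. S - {x}) ` S"

definition common_neighbours :: "'a graph \<Rightarrow> 'a set \<Rightarrow> 'a set" where
  "common_neighbours H A = {v \<in> verts H - A. \<forall>a\<in>A. {a, v} \<in> edges H}"

lemma clique_remove:
  assumes "S \<in> cliques (Suc k) H" "x \<in> S"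
  shows "S - {x} \<in> cliques k H"
  using assms unfolding cliques_def by auto

lemma facets_in_cliques:
  assumes S: "S \<in> cliques (Suc k) H"
  shows "facets S \<in> cliques (Suc k) (TS k H)"
proof -
  have "finite S" "card S = Suc k"
    using S by (simp_all add: cliques_def)
  moreover have "inj_on (\<lambda>x. S - {x}) S"
    by (auto intro!: inj_onI)
  moreover have "{S - {x}, S - {y}} \<in> edges (TS k H)" if "x \<in> S" "y \<in> S" "x \<noteq> y" for x y
  proof -
    have "(S - {x}) - (S - {y}) = {y}" "(S - {y}) - (S - {x}) = {x}"
      using that by auto
    moreover have "{y, x} \<in> edges H"
      using S that unfolding cliques_def by auto
    ultimately show ?thesis
      using clique_remove[OF S] that by (auto simp: edges_TS)
  qed
  ultimately show ?thesis
    using clique_remove[OF S] by (auto simp: cliques_def facets_def card_image)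
qed

lemma facets_union:
  assumes "A \<in> facets S" "B \<in> facets S" "A \<noteq> B"
  shows "A \<union> B = S"
  using assms unfolding facets_def by auto

lemma edge_TS_in_facets:
  assumes "{A, B} \<in> edges (TS k H)"
  shows "A \<union> B \<in> cliques (Suc k) H" "A \<in> facets (A \<union> B)" "B \<in> facets (A \<union> B)"
proof -
  obtain u v where uv: "A - B = {u}" "B - A = {v}" "{u, v} \<in> edges H"
    and A: "A \<in> cliques k H" and B: "B \<in> cliques k H"
    using assms by (auto simp: edges_TS)
  have "{a, b} \<in> edges H" if "a \<in> A \<union> B" "b \<in> A \<union> B" "a \<noteq> b" for a b
  proof -
    have "(a \<in> A \<and> b \<in> A) \<or> (a \<in> B \<and> b \<in> B) \<or> (a = u \<and> b = v) \<or> (a = v \<and> b = u)"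
      using that uv(1,2) by blast
    then show ?thesis
      using A B that uv(3) unfolding cliques_def by (auto simp: insert_commute)
  qed
  moreover have "A \<union> B = insert v A" "v \<notin> A"
    using uv by auto
  ultimately show "A \<union> B \<in> cliques (Suc k) H"
    using A B unfolding cliques_def by auto
  have "A = (A \<union> B) - {v}" "v \<in> A \<union> B" "B = (A \<union> B) - {u}" "u \<in> A \<union> B"
    using uv by auto
  then show "A \<in> facets (A \<union> B)" "B \<in> facets (A \<union> B)"
    unfolding facets_def by (metis image_eqI)+
qed

lemma card_neighbours_inter_facets:
  assumes S: "S \<in> cliques (Suc k) H" and A: "A \<in> cliques k H" "A \<notin> facets S"
  shows "card (neighbours (TS k H) A \<inter> facets S) \<le> 2"
proof (cases "neighbours (TS k H) A \<inter> facets S = {}")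
  case False
  have fin: "finite S" "card S = Suc k" "finite A" "card A = k"
    using S A by (auto simp: cliques_def)
  obtain x where x: "x \<in> S" "{A, S - {x}} \<in> edges (TS k H)"
    using False unfolding neighbours_def facets_def by auto
  obtain u where u: "A - (S - {x}) = {u}"
    using x(2) by (auto simp: edges_TS)
  have "\<not> A \<subseteq> S"
  proof
    assume "A \<subseteq> S"
    then have "card (S - A) = 1"
      using fin by (simp add: card_Diff_subset)
    then obtain y where "S - A = {y}"
      by (auto simp: card_Suc_eq)
    then have "A = S - {y}" "y \<in> S"
      using \<open>A \<subseteq> S\<close> by auto
    then show False
      using A(2) unfolding facets_def by auto
  qed
  then have A_minus_S: "A - S = {u}"
    using u by auto
  then have "0 < k"
    using fin card_gt_0_iff by fastforce
  have "card (A \<inter> S) = k - 1"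
    using fin A_minus_S card_Diff_subset_Int[of A S] by (simp add: Int_commute)
  then have card_S_minus_A: "card (S - A) = 2"
    using fin card_Diff_subset_Int[of S A] \<open>0 < k\<close> by (simp add: Int_commute)
  have "neighbours (TS k H) A \<inter> facets S \<subseteq> (\<lambda>y. S - {y}) ` (S - A)"
  proof
    fix B assume "B \<in> neighbours (TS k H) A \<inter> facets S"
    then obtain y where y: "y \<in> S" "B = S - {y}" "{A, S - {y}} \<in> edges (TS k H)"
      unfolding neighbours_def facets_def by auto
    then obtain u' where u': "A - (S - {y}) = {u'}"
      by (auto simp: edges_TS)
    have "y \<notin> A"
    proof
      assume "y \<in> A"
      then have "y \<in> A - (S - {y})" "u \<in> A - (S - {y})"
        using A_minus_S by auto
      then show False
        using u' A_minus_S y(1) by auto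
    qed
    then show "B \<in> (\<lambda>y. S - {y}) ` (S - A)"
      using y by auto
  qed
  then have "card (neighbours (TS k H) A \<inter> facets S) \<le> card ((\<lambda>y. S - {y}) ` (S - A))"
    using fin by (intro card_mono) auto
  also have "\<dots> \<le> 2"
    using card_image_le[of "S - A" "\<lambda>y. S - {y}"] fin card_S_minus_A by simp
  finally show ?thesis .
qed simp


lemma neighbours_TS:
  assumes A: "A \<in> cliques k H"
  shows "neighbours (TS k H) A = (\<lambda>(u, v). insert v (A - {u})) ` (A \<times> common_neighbours H A)"
proof (intro equalityI subsetI)
  fix B assume "B \<in> neighbours (TS k H) A"
  then have B: "B \<in> cliques k H" and "{A, B} \<in> edges (TS k H)"
    by (auto simp: neighbours_def)
  then obtain u v where uv: "A - B = {u}" "B - A = {v}" "{u, v} \<in> edges H"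
    by (auto simp: edges_TS)
  have "{a, v} \<in> edges H" if "a \<in> A" for a
  proof (cases "a = u")
    case False
    then have "a \<in> B" "v \<in> B" "a \<noteq> v"
      using that uv by auto
    then show ?thesis
      using B unfolding cliques_def by auto
  qed (use uv in simp)
  moreover have "v \<in> verts H" "v \<notin> A"
    using B uv(2) unfolding cliques_def by auto
  moreover have "u \<in> A" "B = insert v (A - {u})"
    using uv by auto
  ultimately show "B \<in> (\<lambda>(u, v). insert v (A - {u})) ` (A \<times> common_neighbours H A)"
    unfolding common_neighbours_def by auto
next
  fix B assume "B \<in> (\<lambda>(u, v). insert v (A - {u})) ` (A \<times> common_neighbours H A)"
  then obtain u v where u: "u \<in> A" and v: "v \<in> common_neighbours H A"
    and B_def: "B = insert v (A - {u})"
    by auto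
  have v': "v \<in> verts H" "v \<notin> A" "\<And>a. a \<in> A \<Longrightarrow> {a, v} \<in> edges H"
    using v unfolding common_neighbours_def by auto
  have "{a, b} \<in> edges H" if "a \<in> B" "b \<in> B" "a \<noteq> b" for a b
    using that A v'(3)[of a] v'(3)[of b] unfolding B_def cliques_def by (auto simp: insert_commute)
  moreover have "card B = k"
    using A u v'(2) card_Suc_Diff1[of A u] unfolding B_def cliques_def by auto
  ultimately have "B \<in> cliques k H"
    using A v' unfolding B_def cliques_def by auto
  moreover have "A - B = {u}" "B - A = {v}" "{u, v} \<in> edges H"
    using u v' unfolding B_def by auto
  ultimately show "B \<in> neighbours (TS k H) A"
    using A by (auto simp: neighbours_def edges_TS)
qed

lemma degree_TS:
  assumes A: "A \<in> cliques k H" and H: "is_graph H"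
  shows "degree (TS k H) A = k * card (common_neighbours H A)"
proof -
  have "inj_on (\<lambda>(u, v). insert v (A - {u})) (A \<times> common_neighbours H A)"
  proof (rule inj_onI, clarify)
    fix u v u' v'
    assume u: "u \<in> A" and "v \<in> common_neighbours H A"
      and eq: "insert v (A - {u}) = insert v' (A - {u'})"
    then have v: "v \<notin> A"
      by (simp add: common_neighbours_def)
    then have "v = v'"
      using eq by blast
    moreover have "u = u'"
    proof (rule ccontr)
      assume "u \<noteq> u'"
      then have "u \<in> insert v (A - {u})"
        using eq u by blast
      then show False
        using u v by blast
    qed
    ultimately show "u = u' \<and> v = v'"
      by simp
  qed
  moreover have "finite (common_neighbours H A)"
    using H unfolding is_graph_def common_neighbours_def by auto
  ultimately show ?thesis
    using A unfolding degree_def neighbours_TS[OF A] cliques_def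
    by (simp add: card_image card_cartesian_product)
qed

lemma TS_like_TS:
  assumes "is_graph H"
  shows "TS_like k (TS k H)"
proof -
  have "TS_block_system k (TS k H) (facets ` cliques (Suc k) H)"
  proof (rule TS_block_systemI)
    show "facets ` cliques (Suc k) H \<subseteq> cliques (Suc k) (TS k H)"
      using facets_in_cliques by blast
    show "card (neighbours (TS k H) A \<inter> K) \<le> 2"
      if K: "K \<in> facets ` cliques (Suc k) H" and A: "A \<in> verts (TS k H) - K" for K A
    proof -
      obtain S where "S \<in> cliques (Suc k) H" "K = facets S"
        using K by blast
      then show ?thesis
        using A by (simp add: card_neighbours_inter_facets)
    qed
    show "\<exists>K\<in>facets ` cliques (Suc k) H. A \<in> K \<and> B \<in> K"
      if "{A, B} \<in> edges (TS k H)" for A B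
      using edge_TS_in_facets[OF that] by blast
    show "K = K'"
      if "K \<in> facets ` cliques (Suc k) H" "K' \<in> facets ` cliques (Suc k) H" "A \<noteq> B"
        "{A, B} \<subseteq> K \<inter> K'" for K K' A B
      using that facets_union[of A _ B] by auto
  qed
  moreover have "\<forall>A\<in>verts (TS k H). k dvd degree (TS k H) A"
    using degree_TS[OF _ assms] by simp
  ultimately show ?thesis
    unfolding TS_like_def by blast
qed

lemma (in graph_isomorphism) TS_like_image:
  assumes "TS_like k G"
  shows "TS_like k G'"
proof -
  obtain Bs where Bs: "TS_block_system k G Bs" and dvd: "\<forall>x\<in>verts G. k dvd degree G x"
    using assms by (auto simp: TS_like_def)
  note cliques = TS_block_systemD(1)[OF Bs]
  have K_verts: "K \<subseteq> verts G" if "K \<in> Bs" for K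
    using cliques that by (auto simp: cliques_def)
  have "TS_block_system k G' (image f ` Bs)"
  proof (rule TS_block_systemI)
    show "image f ` Bs \<subseteq> cliques (Suc k) G'"
      using cliques K_verts image_in_cliques_iff by auto
    show "card (neighbours G' z' \<inter> K') \<le> 2"
      if K': "K' \<in> image f ` Bs" and z': "z' \<in> verts G' - K'" for K' z'
    proof -
      obtain K where K: "K \<in> Bs" "K' = f ` K"
        using K' by blast
      obtain z where z: "z \<in> verts G" "z' = f z"
        using z' image_verts by blast
      have "neighbours G' z' \<inter> K' = f ` (neighbours G z \<inter> K)"
        using inj K_verts[OF K(1)] unfolding K z neighbours_image[OF z(1)]
        by (simp add: inj_on_image_Int neighbours_def)
      then have "card (neighbours G' z' \<inter> K') \<le> card (neighbours G z \<inter> K)"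
        using cliques K(1) by (auto simp: card_image_le cliques_def)
      also have "\<dots> \<le> 2"
        using TS_block_systemD(2)[OF Bs K(1)] K z z' by blast
      finally show ?thesis .
    qed
    show "\<exists>K'\<in>image f ` Bs. x' \<in> K' \<and> y' \<in> K'"
      if x'y': "x' \<in> verts G'" "y' \<in> verts G'" "x' \<noteq> y'" "{x', y'} \<in> edges G'" for x' y'
    proof -
      obtain x y where "x \<in> verts G" "y \<in> verts G" "x' = f x" "y' = f y"
        using x'y'(1,2) image_verts by (metis imageE)
      then show ?thesis
        using TS_block_systemD(3)[OF Bs, of x y] x'y' edge_iff by blast
    qed
    show "K1 = K2" if K12: "K1 \<in> image f ` Bs" "K2 \<in> image f ` Bs"
      and x'y': "x' \<noteq> y'" "{x', y'} \<subseteq> K1 \<inter> K2" for K1 K2 x' y'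
    proof -
      obtain K K' where K: "K \<in> Bs" "K' \<in> Bs" "K1 = f ` K" "K2 = f ` K'"
        using K12 by auto
      then have "K1 \<inter> K2 = f ` (K \<inter> K')"
        using inj K_verts by (simp add: inj_on_image_Int)
      then obtain x y where "{x, y} \<subseteq> K \<inter> K'" "x' = f x" "y' = f y"
        using x'y'(2) by auto
      then show ?thesis
        using TS_block_systemD(4)[OF Bs K(1,2), of x y] x'y'(1) K by auto
    qed
  qed
  moreover have "k dvd degree G' x'" if "x' \<in> verts G'" for x'
    using that dvd degree_image image_verts by (metis imageE)
  ultimately show ?thesis
    unfolding TS_like_def by blast
qed

lemma KTS_imp_TS_like: "k \<in> KTS G \<Longrightarrow> TS_like k G"
  unfolding KTS_def graph_iso_iff_isomorphism
  using TS_like_TS graph_isomorphism.TS_like_image by blast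

lemma KTS_eq_1I:
  assumes "is_graph G" "\<And>k. 2 \<le> k \<Longrightarrow> \<not> TS_like k G"
  shows "KTS G = {1}"
proof -
  have "k = 1" if "k \<in> KTS G" for k
  proof -
    have "1 \<le> k"
      using that by (simp add: KTS_def)
    moreover have "\<not> 2 \<le> k"
      using assms(2) KTS_imp_TS_like[OF that] by blast
    ultimately show "k = 1"
      by simp
  qed
  then show ?thesis
    using one_in_KTS[OF assms(1)] by blast
qed

lemma TS_like_dvd_degree: "TS_like k G \<Longrightarrow> x \<in> verts G \<Longrightarrow> k dvd degree G x"
  by (simp add: TS_like_def)

lemma TS_like_obtain_block:
  assumes "TS_like k G" "x \<in> verts G" "y \<in> verts G" "x \<noteq> y" "{x, y} \<in> edges G"
  obtains K where "K \<in> cliques (Suc k) G" "x \<in> K" "y \<in> K"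
    "\<And>z. z \<in> verts G - K \<Longrightarrow> card (neighbours G z \<inter> K) \<le> 2"
proof -
  obtain Bs where Bs: "TS_block_system k G Bs"
    using assms(1) by (auto simp: TS_like_def)
  obtain K where "K \<in> Bs" "x \<in> K" "y \<in> K"
    using TS_block_systemD(3)[OF Bs assms(2-5)] by blast
  then show thesis
    using that TS_block_systemD(1,2)[OF Bs] by blast
qed

lemma TS_like_clique_size:
  assumes G: "TS_like k G" and k: "2 \<le> k" and W: "W \<in> cliques m G"
    and xy: "x \<in> W" "y \<in> W" "x \<noteq> y" and nbrs: "neighbours G x \<subseteq> W"
  shows "m = Suc k"
proof -
  have W_verts: "W \<subseteq> verts G" and W_edge: "\<And>a b. a \<in> W \<Longrightarrow> b \<in> W \<Longrightarrow> a \<noteq> b \<Longrightarrow> {a, b} \<in> edges G"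
    using W by (auto simp: cliques_def)
  obtain K where K: "K \<in> cliques (Suc k) G" "x \<in> K" "y \<in> K"
    and K_nbrs: "\<And>z. z \<in> verts G - K \<Longrightarrow> card (neighbours G z \<inter> K) \<le> 2"
    using TS_like_obtain_block[OF G _ _ xy(3) W_edge[OF xy]] W_verts xy by blast
  have K_verts: "K \<subseteq> verts G" and K_card: "card K = Suc k"
    and K_edge: "\<And>a b. a \<in> K \<Longrightarrow> b \<in> K \<Longrightarrow> a \<noteq> b \<Longrightarrow> {a, b} \<in> edges G"
    using K(1) by (auto simp: cliques_def)
  have "K \<subseteq> W"
  proof
    fix z assume "z \<in> K"
    then show "z \<in> W"
      using K_edge[OF K(2)] K_verts nbrs xy(1) by (cases "z = x") (auto simp: neighbours_def)
  qed
  moreover have "W \<subseteq> K"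
  proof
    fix w assume w: "w \<in> W"
    show "w \<in> K"
    proof (rule ccontr)
      assume "w \<notin> K"
      then have "neighbours G w \<inter> K = K"
        using \<open>K \<subseteq> W\<close> K_verts W_edge[OF w] by (auto simp: neighbours_def)
      then show False
        using K_nbrs[of w] \<open>w \<notin> K\<close> w W_verts K_card k by auto
    qed
  qed
  ultimately show ?thesis
    using W K_card by (simp add: cliques_def)
qed


definition cluster_graph :: "'a set \<Rightarrow> ('a \<Rightarrow> 'b) \<Rightarrow> 'a graph" where
  "cluster_graph V c = mk_graph V (\<lambda>u v. c u = c v)"

lemma verts_cluster_graph [simp]: "verts (cluster_graph V c) = V"
  by (simp add: cluster_graph_def)

lemma edges_cluster_graph:
  "{u, v} \<in> edges (cluster_graph V c) \<longleftrightarrow> u \<in> V \<and> v \<in> V \<and> u \<noteq> v \<and> c u = c v"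
  by (auto simp: cluster_graph_def edges_mk_graph)

lemma is_graph_cluster_graph: "finite V \<Longrightarrow> is_graph (cluster_graph V c)"
  unfolding cluster_graph_def by (rule is_graph_mk_graph)

lemma cliques_cluster_graph:
  assumes "1 \<le> k"
  shows "A \<in> cliques k (cluster_graph V c) \<longleftrightarrow> card A = k \<and> (\<exists>i. A \<subseteq> {u \<in> V. c u = i})"
proof
  assume A: "A \<in> cliques k (cluster_graph V c)"
  then obtain a where "a \<in> A"
    using assms by (fastforce simp: cliques_def)
  then have "A \<subseteq> {u \<in> V. c u = c a}"
    using A by (auto simp: cliques_def edges_cluster_graph)
  then show "card A = k \<and> (\<exists>i. A \<subseteq> {u \<in> V. c u = i})"
    using A by (auto simp: cliques_def)
next
  assume "card A = k \<and> (\<exists>i. A \<subseteq> {u \<in> V. c u = i})"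
  moreover from this have "finite A"
    using assms by (intro card_ge_0_finite) simp
  ultimately show "A \<in> cliques k (cluster_graph V c)"
    by (auto simp: cliques_def edges_cluster_graph)
qed

lemma ex_diff_eq_singleton:
  assumes "finite A" "finite B" "card A = card B" "A \<noteq> B" "card (A \<union> B) \<le> Suc (card A)"
  shows "\<exists>u. A - B = {u}"
proof -
  have "card (A \<union> B) = card B + card (A - B)"
    using assms(1,2) card_Un_disjoint[of B "A - B"] by (simp add: Un_commute)
  moreover have "A - B \<noteq> {}"
    using assms(2-4) card_subset_eq[of B A] by auto
  then have "card (A - B) \<ge> 1"
    using assms(1) by (simp add: Suc_leI card_gt_0_iff)
  ultimately have "card (A - B) = 1"
    using assms(3,5) by simp
  then show ?thesis
    by (simp add: card_1_singleton_iff)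
qed

lemma edges_TS_cluster_graph:
  assumes k: "1 \<le> k" and V: "finite V" and classes: "\<And>i. card {u \<in> V. c u = i} \<le> Suc k"
    and A: "A \<in> cliques k (cluster_graph V c)" and B: "B \<in> cliques k (cluster_graph V c)"
  shows "{A, B} \<in> edges (TS k (cluster_graph V c)) \<longleftrightarrow> A \<noteq> B \<and> c ` A = c ` B"
proof -
  obtain i j where A_class: "A \<subseteq> {u \<in> V. c u = i}" and B_class: "B \<subseteq> {u \<in> V. c u = j}"
    and card: "card A = k" "card B = k"
    using A B by (auto simp: cliques_cluster_graph[OF k])
  moreover have "A \<noteq> {}" "B \<noteq> {}"
    using card k by auto
  ultimately have colours: "c ` A = {i}" "c ` B = {j}"
    by auto
  show ?thesis
  proof
    assume "{A, B} \<in> edges (TS k (cluster_graph V c))"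
    then obtain u v where uv: "A - B = {u}" "B - A = {v}" "c u = c v"
      by (auto simp: edges_TS edges_cluster_graph)
    then have "u \<in> A" "v \<in> B" "A \<noteq> B"
      by blast+
    then show "A \<noteq> B \<and> c ` A = c ` B"
      using uv(3) A_class B_class colours by auto
  next
    assume AB: "A \<noteq> B \<and> c ` A = c ` B"
    then have "A \<union> B \<subseteq> {u \<in> V. c u = i}"
      using A_class B_class colours by auto
    then have "card (A \<union> B) \<le> Suc k"
      using V classes[of i] card_mono[of "{u \<in> V. c u = i}" "A \<union> B"] by fastforce
    moreover have "finite A" "finite B"
      using card k by (auto intro!: card_ge_0_finite)
    ultimately obtain u v where uv: "A - B = {u}" "B - A = {v}"
      using ex_diff_eq_singleton[of A B] ex_diff_eq_singleton[of B A] AB card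
      by (metis Un_commute)
    then have "u \<in> A" "v \<in> B" "u \<noteq> v"
      by blast+
    then have "{u, v} \<in> edges (cluster_graph V c)"
      using \<open>A \<union> B \<subseteq> {u \<in> V. c u = i}\<close> by (auto simp: edges_cluster_graph)
    then show "{A, B} \<in> edges (TS k (cluster_graph V c))"
      using A B uv by (auto simp: edges_TS)
  qed
qed


lemma TS_cluster_graph_isomorphism:
  assumes k: "1 \<le> k" and W: "finite W" and classes: "\<And>i. card {u \<in> W. c u = i} \<le> Suc k"
    and bij: "bij_betw g (verts G) (cliques k (cluster_graph W c))"
    and edges: "\<And>x y. x \<in> verts G \<Longrightarrow> y \<in> verts G \<Longrightarrow>
      {x, y} \<in> edges G \<longleftrightarrow> x \<noteq> y \<and> c ` g x = c ` g y"
  shows "graph_isomorphism G (TS k (cluster_graph W c)) g"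
proof
  show "bij_betw g (verts G) (verts (TS k (cluster_graph W c)))"
    using bij by simp
  fix x y assume "x \<in> verts G" "y \<in> verts G"
  moreover from this have "g x \<in> cliques k (cluster_graph W c)" "g y \<in> cliques k (cluster_graph W c)"
    using bij by (auto dest: bij_betwE)
  moreover have "g x = g y \<longleftrightarrow> x = y"
    using bij \<open>x \<in> verts G\<close> \<open>y \<in> verts G\<close> by (auto simp: bij_betw_def inj_on_eq_iff)
  ultimately show "{g x, g y} \<in> edges (TS k (cluster_graph W c)) \<longleftrightarrow> {x, y} \<in> edges G"
    using edges_TS_cluster_graph[OF k W classes] edges by simp
qed

lemma ex_eq_Diff_singleton:
  assumes "finite C" "A \<subseteq> C" "card C = Suc (card A)"
  shows "\<exists>x\<in>C. A = C - {x}"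
proof -
  have "card (C - A) = 1"
    using assms by (simp add: card_Diff_subset finite_subset)
  then obtain x where "C - A = {x}"
    by (auto simp: card_Suc_eq)
  then show ?thesis
    using assms(2) by blast
qed

lemma KTS_cluster_graph_intro:
  fixes V :: "'a set" and d :: "'a \<Rightarrow> 'b"
  assumes k: "1 \<le> k" and V: "finite V"
    and sizes: "\<And>x. x \<in> V \<Longrightarrow> card {y \<in> V. d y = d x} \<in> {1, Suc k}"
  shows "k \<in> KTS (cluster_graph V d)"
proof -
  define single where "single x \<longleftrightarrow> card {y \<in> V. d y = d x} = 1" for x
  define W where "W = {(y, i). y \<in> V \<and> (if single y then 1 \<le> i \<and> i \<le> k else i = 0)}"
  define c :: "'a \<times> nat \<Rightarrow> 'b" where "c = d \<circ> fst"
  define cls where "cls x = {p \<in> W. c p = d x}" for x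
  define g where "g x = cls x - {(x, 0)}" for x
  have single_iff: "single x \<longleftrightarrow> {y \<in> V. d y = d x} = {x}" if "x \<in> V" for x
  proof -
    have "x \<in> {y \<in> V. d y = d x}"
      using that by simp
    then show ?thesis
      unfolding single_def One_nat_def card_1_singleton_iff by (metis singletonD)
  qed
  have single_cong: "single y \<longleftrightarrow> single x" if "d y = d x" for x y
    using that by (simp add: single_def)
  have mem_cls: "(y, i) \<in> cls x \<longleftrightarrow>
      y \<in> V \<and> d y = d x \<and> (if single y then 1 \<le> i \<and> i \<le> k else i = 0)" for x y i
    by (auto simp: cls_def W_def c_def)
  have cls_single: "cls x = {x} \<times> {1..k}" if "x \<in> V" "single x" for x
  proof -
    have "(y, i) \<in> cls x \<longleftrightarrow> (y, i) \<in> {x} \<times> {1..k}" for y i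
      using that single_iff[of x] single_cong[of y x] by (auto simp: mem_cls)
    then show ?thesis
      by auto
  qed
  have cls_big: "cls x = (\<lambda>y. (y, 0)) ` {y \<in> V. d y = d x}" if "x \<in> V" "\<not> single x" for x
  proof -
    have "(y, i) \<in> cls x \<longleftrightarrow> (y, i) \<in> (\<lambda>y. (y, 0)) ` {y \<in> V. d y = d x}" for y i
      using that single_cong[of y x] by (auto simp: mem_cls)
    then show ?thesis
      by auto
  qed
  have card_cls: "card (cls x) = (if single x then k else Suc k)" if "x \<in> V" for x
  proof (cases "single x")
    case False
    then have "card {y \<in> V. d y = d x} = Suc k"
      using sizes[OF that] by (auto simp: single_def)
    then show ?thesis
      using cls_big[OF that False] False by (simp add: card_image inj_on_def)
  qed (simp add: cls_single[OF that])
  have W_fin: "finite W"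
    by (rule finite_subset[of _ "V \<times> {0..k}"]) (auto simp: W_def V split: if_splits)
  have classes: "card {p \<in> W. c p = i} \<le> Suc k" for i
  proof (cases "\<exists>p\<in>W. c p = i")
    case True
    then obtain x j where "(x, j) \<in> W" "d x = i"
      by (auto simp: c_def)
    then have "{p \<in> W. c p = i} = cls x" "x \<in> V"
      by (auto simp: cls_def W_def)
    then show ?thesis
      using card_cls by simp
  next
    case False
    then have "{p \<in> W. c p = i} = {}"
      by auto
    then show ?thesis
      by (metis card.empty le0)
  qed
  have card_g: "card (g x) = k" and g_cls: "g x \<subseteq> cls x" if "x \<in> V" for x
    using card_cls[OF that] cls_single[OF that] that W_fin unfolding g_def
    by (auto simp: cls_def W_def c_def card_Diff_singleton_if finite_subset)
  have colour_g: "c ` g x = {d x}" if "x \<in> V" for x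
  proof -
    have "g x \<noteq> {}"
      using card_g[OF that] k by auto
    moreover have "c p = d x" if "p \<in> g x" for p
      using g_cls \<open>x \<in> V\<close> that by (auto simp: cls_def)
    ultimately show ?thesis
      by auto
  qed
  have bij: "bij_betw g V (cliques k (cluster_graph W c))"
    unfolding bij_betw_def
  proof
    show "inj_on g V"
    proof (rule inj_onI)
      fix x y assume x: "x \<in> V" and y: "y \<in> V" and eq: "g x = g y"
      then have "d x = d y"
        using colour_g by (metis singleton_inject)
      show "x = y"
      proof (cases "single x")
        case True
        then show ?thesis
          using single_iff[OF x] y \<open>d x = d y\<close> by auto
      next
        case False
        then have "(y, 0) \<in> cls x"
          using cls_big[OF x] y \<open>d x = d y\<close> by auto
        then show ?thesis
          using eq unfolding g_def cls_def \<open>d x = d y\<close> by blast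
      qed
    qed
    show "g ` V = cliques k (cluster_graph W c)"
    proof (intro equalityI subsetI)
      fix A assume "A \<in> g ` V"
      then show "A \<in> cliques k (cluster_graph W c)"
        using card_g g_cls by (auto simp: cliques_cluster_graph[OF k] cls_def)
    next
      fix A assume "A \<in> cliques k (cluster_graph W c)"
      then obtain i where A: "card A = k" "A \<subseteq> {p \<in> W. c p = i}"
        by (auto simp: cliques_cluster_graph[OF k])
      moreover from this have "A \<noteq> {}"
        using k by auto
      then obtain x j where "(x, j) \<in> A"
        by (metis all_not_in_conv surj_pair)
      then have "(x, j) \<in> W" "c (x, j) = i"
        using A(2) by auto
      then have x: "x \<in> V" and "i = d x"
        by (auto simp: W_def c_def)
      then have A_cls: "A \<subseteq> cls x"
        using A(2) by (simp add: cls_def)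
      have cls_fin: "finite (cls x)"
        using W_fin by (simp add: cls_def)
      show "A \<in> g ` V"
      proof (cases "single x")
        case True
        then have "A = cls x"
          using card_subset_eq[OF cls_fin A_cls] A card_cls[OF x] by simp
        moreover have "(x, 0) \<notin> cls x"
          using cls_single[OF x True] by simp
        ultimately show ?thesis
          using x unfolding g_def by auto
      next
        case False
        then obtain q where "q \<in> cls x" "A = cls x - {q}"
          using ex_eq_Diff_singleton[OF cls_fin A_cls] A card_cls[OF x] by auto
        moreover from this obtain y where "y \<in> V" "d y = d x" "q = (y, 0)"
          using cls_big[OF x False] by auto
        moreover from this have "cls y = cls x"
          by (simp add: cls_def)
        ultimately show ?thesis
          unfolding g_def by auto
      qed
    qed
  qed
  have edge_iff: "{x, y} \<in> edges (cluster_graph V d) \<longleftrightarrow> x \<noteq> y \<and> c ` g x = c ` g y"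
    if "x \<in> V" "y \<in> V" for x y
    using that colour_g by (auto simp: edges_cluster_graph)
  have "graph_isomorphism (cluster_graph V d) (TS k (cluster_graph W c)) g"
    using bij edge_iff by (intro TS_cluster_graph_isomorphism[OF k W_fin classes]) auto
  then have "graph_iso (TS k (cluster_graph W c)) (cluster_graph V d)"
    using graph_isomorphism.inverse graph_iso_iff_isomorphism by blast
  then show ?thesis
    using KTS_intro is_graph_cluster_graph[OF W_fin] k by blast
qed


theorem KTS_cluster_graph:
  assumes V: "finite V"
  shows "KTS (cluster_graph V d) = insert 1 {k. 2 \<le> k \<and> (\<forall>x\<in>V. card {y \<in> V. d y = d x} \<in> {1, Suc k})}"
proof (intro equalityI subsetI)
  fix k assume k: "k \<in> KTS (cluster_graph V d)"
  have "card {y \<in> V. d y = d x} \<in> {1, Suc k}" if "2 \<le> k" "x \<in> V" for x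
  proof (rule ccontr)
    let ?C = "{y \<in> V. d y = d x}"
    assume C_card: "card ?C \<notin> {1, Suc k}"
    have "?C \<in> cliques (card ?C) (cluster_graph V d)"
      using V by (auto simp: cliques_def edges_cluster_graph)
    moreover have "x \<in> ?C" "neighbours (cluster_graph V d) x \<subseteq> ?C"
      using \<open>x \<in> V\<close> by (auto simp: neighbours_def edges_cluster_graph)
    moreover have "?C \<noteq> {x}"
      using C_card by auto
    then obtain y where "y \<in> ?C" "y \<noteq> x"
      using \<open>x \<in> ?C\<close> by blast
    ultimately have "card ?C = Suc k"
      using TS_like_clique_size[OF KTS_imp_TS_like[OF k] \<open>2 \<le> k\<close>] by blast
    then show False
      using C_card by simp
  qed
  moreover have "1 \<le> k"
    using k by (simp add: KTS_def)
  ultimately show "k \<in> insert 1 {k. 2 \<le> k \<and> (\<forall>x\<in>V. card {y \<in> V. d y = d x} \<in> {1, Suc k})}"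
    by (cases "k = 1") auto
next
  fix k assume k: "k \<in> insert 1 {k. 2 \<le> k \<and> (\<forall>x\<in>V. card {y \<in> V. d y = d x} \<in> {1, Suc k})}"
  show "k \<in> KTS (cluster_graph V d)"
  proof (cases "k = 1")
    case True
    then show ?thesis
      using one_in_KTS[OF is_graph_cluster_graph[OF V]] by simp
  next
    case False
    then show ?thesis
      using k by (intro KTS_cluster_graph_intro[OF _ V]) auto
  qed
qed

corollary KTS_edgeless:
  assumes "finite V"
  shows "KTS (cluster_graph V id) = {k. 1 \<le> k}"
proof -
  have "{y \<in> V. id y = id x} = {x}" if "x \<in> V" for x
    using that by auto
  then show ?thesis
    unfolding KTS_cluster_graph[OF assms] by auto
qed

lemma complement_complete_graph: "complement (complete_graph n) = cluster_graph {0..<n} id"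
  unfolding complete_graph_def cluster_graph_def complement_mk_graph by (rule mk_graph_cong) auto

lemma complement_complete_bipartite:
  "complement (complete_bipartite m n) = cluster_graph {0..<m + n} (\<lambda>x. x < m)"
  unfolding complete_bipartite_def cluster_graph_def complement_mk_graph
  by (rule mk_graph_cong) auto

lemma complement_book_graph: "complement (book_graph p) = cluster_graph {0..<p + 2} (\<lambda>x. min x 2)"
  unfolding book_graph_def cluster_graph_def complement_mk_graph
  by (rule mk_graph_cong) auto

lemma complement_friendship_graph_1: "complement (friendship_graph 1) = cluster_graph {0..2} id"
  unfolding friendship_graph_def cluster_graph_def complement_mk_graph mult_1_right
  by (rule mk_graph_cong) (simp, presburger)

lemma KTS_complement_complete_bipartite:
  "KTS (complement (complete_bipartite m n)) =
     insert 1 {k. 2 \<le> k \<and> (0 < m \<longrightarrow> m \<in> {1, Suc k}) \<and> (0 < n \<longrightarrow> n \<in> {1, Suc k})}"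
proof -
  let ?card = "\<lambda>x. card {y \<in> {0..<m + n}. (y < m) = (x < m)}"
  have left: "?card x = m" if "x < m" for x
  proof -
    have "{y \<in> {0..<m + n}. (y < m) = (x < m)} = {0..<m}"
      using that by auto
    then show ?thesis
      by simp
  qed
  have right: "?card x = n" if "m \<le> x" for x
  proof -
    have "{y \<in> {0..<m + n}. (y < m) = (x < m)} = {m..<m + n}"
      using that by auto
    then show ?thesis
      by simp
  qed
  have "(\<forall>x\<in>{0..<m + n}. ?card x \<in> {1, Suc k}) \<longleftrightarrow>
      (0 < m \<longrightarrow> m \<in> {1, Suc k}) \<and> (0 < n \<longrightarrow> n \<in> {1, Suc k})" for k
  proof
    assume sizes: "\<forall>x\<in>{0..<m + n}. ?card x \<in> {1, Suc k}"
    show "(0 < m \<longrightarrow> m \<in> {1, Suc k}) \<and> (0 < n \<longrightarrow> n \<in> {1, Suc k})"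
      using sizes[rule_format, of 0] sizes[rule_format, of m] left[of 0] right[of m] by auto
  next
    assume parts: "(0 < m \<longrightarrow> m \<in> {1, Suc k}) \<and> (0 < n \<longrightarrow> n \<in> {1, Suc k})"
    show "\<forall>x\<in>{0..<m + n}. ?card x \<in> {1, Suc k}"
    proof
      fix x assume "x \<in> {0..<m + n}"
      then show "?card x \<in> {1, Suc k}"
        using left[of x] right[of x] parts by (cases "x < m") auto
    qed
  qed
  then show ?thesis
    unfolding complement_complete_bipartite KTS_cluster_graph[OF finite_atLeastLessThan] by simp
qed

lemma KTS_complement_book_graph:
  assumes "1 \<le> p"
  shows "KTS (complement (book_graph p)) = insert 1 {k. 2 \<le> k \<and> p \<in> {1, Suc k}}"
proof -
  have cluster: "{y \<in> {0..<p + 2}. min y 2 = min x 2} = (if x < 2 then {x} else {2..<p + 2})"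
    if "x < p + 2" for x
    using that by auto
  have "(\<forall>x\<in>{0..<p + 2}. card {y \<in> {0..<p + 2}. min y 2 = min x 2} \<in> {1, Suc k}) \<longleftrightarrow>
      p \<in> {1, Suc k}" for k
  proof
    assume sizes: "\<forall>x\<in>{0..<p + 2}. card {y \<in> {0..<p + 2}. min y 2 = min x 2} \<in> {1, Suc k}"
    show "p \<in> {1, Suc k}"
      using sizes[rule_format, of 2] cluster[of 2] assms by auto
  next
    assume "p \<in> {1, Suc k}"
    then show "\<forall>x\<in>{0..<p + 2}. card {y \<in> {0..<p + 2}. min y 2 = min x 2} \<in> {1, Suc k}"
      using cluster by auto
  qed
  then show ?thesis
    unfolding complement_book_graph KTS_cluster_graph[OF finite_atLeastLessThan] by simp
qed


lemma neighbours_mk_graph: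
  "x \<in> V \<Longrightarrow> neighbours (mk_graph V R) x = {y \<in> V. y \<noteq> x \<and> (R x y \<or> R y x)}"
  by (auto simp: neighbours_def edges_mk_graph)

lemma card_le_2_if_adjacent_to_block:
  assumes K: "K \<in> cliques m G" and z: "z \<in> verts G - K"
    and block: "card (neighbours G z \<inter> K) \<le> 2"
    and S: "S \<subseteq> K" "\<And>a. a \<in> S \<Longrightarrow> {z, a} \<in> edges G"
  shows "card S \<le> 2"
proof -
  have "S \<subseteq> neighbours G z \<inter> K"
    using K S by (auto simp: neighbours_def cliques_def)
  moreover have "finite K"
    using K by (simp add: cliques_def)
  ultimately show ?thesis
    using block card_mono[of "neighbours G z \<inter> K" S] by simp
qed

lemma complement_path_graph: "complement (path_graph n) = mk_graph {0..<n} (\<lambda>u v. u + 1 < v)"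
  unfolding path_graph_def complement_mk_graph by (rule mk_graph_cong) auto

lemma not_TS_like_complement_path_graph:
  assumes "3 \<le> n" "2 \<le> k"
  shows "\<not> TS_like k (complement (path_graph n))"
proof
  let ?G = "mk_graph {0..<n} (\<lambda>u v. u + 1 < v)"
  assume "TS_like k (complement (path_graph n))"
  then have G: "TS_like k ?G"
    by (simp only: complement_path_graph)
  have "k dvd degree ?G 0" "k dvd degree ?G 1"
    using TS_like_dvd_degree[OF G, of 0] TS_like_dvd_degree[OF G, of 1] assms by simp_all
  moreover have "neighbours ?G 0 = {2..<n}" "neighbours ?G 1 = {3..<n}"
    using assms by (auto simp: neighbours_mk_graph)
  ultimately have "k dvd n - 2" "k dvd n - 3"
    by (simp_all add: degree_def)
  then have "k dvd (n - 2) - (n - 3)"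
    by (rule dvd_diff_nat)
  moreover have "(n - 2) - (n - 3) = 1"
    using assms by simp
  ultimately show False
    using assms by simp
qed

lemma KTS_complement_path_graph: "3 \<le> n \<Longrightarrow> KTS (complement (path_graph n)) = {1}"
  using not_TS_like_complement_path_graph
  by (intro KTS_eq_1I) (simp_all add: complement_path_graph is_graph_mk_graph)

lemma complement_cycle_graph:
  "complement (cycle_graph n) = mk_graph {0..<n} (\<lambda>u v. u + 1 < v \<and> \<not> (u = 0 \<and> v = n - 1))"
proof -
  have "(u + 1) mod n = (if u + 1 = n then 0 else u + 1)" if "u < n" for u
    using that by simp
  then show ?thesis
    unfolding cycle_graph_def complement_mk_graph by (intro mk_graph_cong) auto
qed


lemma edges_complement_cycle_graph:
  "{u, v} \<in> edges (complement (cycle_graph n)) \<longleftrightarrow> u < n \<and> v < n \<and>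
     (u + 1 < v \<and> \<not> (u = 0 \<and> v = n - 1) \<or> v + 1 < u \<and> \<not> (v = 0 \<and> u = n - 1))"
  by (auto simp: complement_cycle_graph edges_mk_graph)

lemma verts_complement_cycle_graph [simp]: "verts (complement (cycle_graph n)) = {0..<n}"
  by (simp add: complement_cycle_graph)

lemma not_TS_like_complement_cycle_7: "\<not> TS_like 2 (complement (cycle_graph 7))"
proof
  let ?G = "complement (cycle_graph 7)"
  assume "TS_like 2 ?G"
  then obtain Bs where Bs: "TS_block_system 2 ?G Bs"
    by (auto simp: TS_like_def)
  have block_through: "\<exists>K\<in>Bs. {x, y, z} \<subseteq> K"
    if xy: "x < 7" "y < 7" "x \<noteq> y" "{x, y} \<in> edges ?G"
      and z: "\<And>b. {x, b} \<in> edges ?G \<Longrightarrow> {y, b} \<in> edges ?G \<Longrightarrow> b = z" for x y z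
  proof -
    obtain K where K: "K \<in> Bs" "x \<in> K" "y \<in> K"
      using TS_block_systemD(3)[OF Bs, of x y] xy by auto
    then have clique: "K \<in> cliques 3 ?G"
      using TS_block_systemD(1)[OF Bs] by (auto simp: numeral_3_eq_3)
    then have "card (K - {x, y}) = 1"
      using K xy(3) by (simp add: cliques_def card_Diff_subset)
    then obtain b where "K - {x, y} = {b}"
      by (auto simp: card_Suc_eq)
    then have "b \<in> K" "b \<noteq> x" "b \<noteq> y"
      by auto
    then have "b = z"
      using z clique K by (auto simp: cliques_def)
    then show ?thesis
      using K \<open>b \<in> K\<close> by auto
  qed
  obtain K where K: "K \<in> Bs" "{0, 4, 2} \<subseteq> K"
    using block_through[of 0 4 2] by (auto simp: edges_complement_cycle_graph)
  obtain K' where K': "K' \<in> Bs" "{2, 6, 4} \<subseteq> K'"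
    using block_through[of 2 6 4] by (auto simp: edges_complement_cycle_graph)
  have "K = K'"
    using TS_block_systemD(4)[OF Bs K(1) K'(1), of 2 4] K K' by auto
  then have "card {0, 2, 4, 6 :: nat} \<le> card K"
    using K K' TS_block_systemD(1)[OF Bs] by (intro card_mono) (auto simp: cliques_def)
  moreover have "card K = 3"
    using K TS_block_systemD(1)[OF Bs] by (auto simp: cliques_def)
  ultimately show False
    by simp
qed

locale complement_cycle_block =
  fixes n k :: nat and K :: "nat set"
  assumes n: "5 \<le> n"
    and clique: "K \<in> cliques (Suc k) (complement (cycle_graph n))"
    and zero_two: "0 \<in> K" "2 \<in> K"
    and rest: "\<And>a. a \<in> K - {0, 2} \<Longrightarrow> 4 \<le> a \<and> a \<le> n - 2"
    and sparse: "\<And>z S. z < n \<Longrightarrow> z \<notin> K \<Longrightarrow> S \<subseteq> K \<Longrightarrow>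
      (\<And>a. a \<in> S \<Longrightarrow> {z, a} \<in> edges (complement (cycle_graph n))) \<Longrightarrow> card S \<le> 2"
begin

lemma finite_K: "finite K" and card_K: "card K = Suc k"
  and adjacent: "\<And>a b. a \<in> K \<Longrightarrow> b \<in> K \<Longrightarrow> a \<noteq> b \<Longrightarrow> {a, b} \<in> edges (complement (cycle_graph n))"
  using clique by (auto simp: cliques_def)

lemma not_in_K: "z \<notin> K" if "a \<in> K" "z \<noteq> a" "{z, a} \<notin> edges (complement (cycle_graph n))"
  using that adjacent by blast

lemma card_rest: "card (K - {0, 2}) = k - 1"
  using finite_K card_K zero_two by (simp add: card_Diff_subset)

lemma k_le_3: "k \<le> 3"
proof -
  have "card (K - {0, 2}) \<le> 2"
  proof (rule sparse)
    show "1 \<notin> K"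
      using zero_two by (intro not_in_K[of 0]) (auto simp: edges_complement_cycle_graph)
    show "{1, a} \<in> edges (complement (cycle_graph n))" if "a \<in> K - {0, 2}" for a
      using rest[OF that] n by (auto simp: edges_complement_cycle_graph)
  qed (use n in auto)
  then show ?thesis
    using card_rest by simp
qed

lemma not_k_3:
  assumes "k = 3" "3 dvd n - 3"
  shows False
proof -
  define R where "R = K - {0, 2}"
  have R: "finite R" "card R = 2" "R \<subseteq> K"
    using finite_K card_rest assms(1) by (auto simp: R_def)
  have R_range: "4 \<le> a \<and> a \<le> n - 2" if "a \<in> R" for a
    using that rest by (simp add: R_def)
  have "card (insert 0 (R - {4})) \<le> 2"
  proof (rule sparse)
    show "3 \<notin> K"
      using zero_two by (intro not_in_K[of 2]) (auto simp: edges_complement_cycle_graph)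
    show "{3, a} \<in> edges (complement (cycle_graph n))" if "a \<in> insert 0 (R - {4})" for a
      using that R_range[of a] n by (cases "a = 0") (auto simp: edges_complement_cycle_graph)
  qed (use n R zero_two in auto)
  then have "4 \<in> R"
    using R(1,2) by (cases "4 \<in> R") (auto simp: R_def)
  have "card (insert 2 (R - {n - 2})) \<le> 2"
  proof (rule sparse)
    show "n - 1 \<notin> K"
      using zero_two n by (intro not_in_K[of 0]) (auto simp: edges_complement_cycle_graph)
    show "{n - 1, a} \<in> edges (complement (cycle_graph n))" if "a \<in> insert 2 (R - {n - 2})" for a
      using that R_range[of a] n by (cases "a = 2") (auto simp: edges_complement_cycle_graph)
  qed (use n R zero_two in auto)
  then have "n - 2 \<in> R"
    using R(1,2) by (cases "n - 2 \<in> R") (auto simp: R_def)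
  have "n - 2 \<noteq> 4"
  proof
    assume "n - 2 = 4"
    then have "R \<subseteq> {4}"
      using R_range by fastforce
    then show False
      using R(2) card_mono[of "{4}" R] by simp
  qed
  moreover have "4 \<in> K" "n - 2 \<in> K"
    using \<open>4 \<in> R\<close> \<open>n - 2 \<in> R\<close> R(3) by auto
  ultimately have "{4, n - 2} \<in> edges (complement (cycle_graph n))"
    by (intro adjacent) auto
  then have "8 \<le> n"
    by (auto simp: edges_complement_cycle_graph)
  then have "9 \<le> n"
    using assms(2) by presburger
  have "card {0, 2, n - 2} \<le> 2"
  proof (rule sparse)
    show "5 \<notin> K"
      using \<open>4 \<in> R\<close> R(3) by (intro not_in_K[of 4]) (auto simp: edges_complement_cycle_graph)
  qed (use \<open>9 \<le> n\<close> zero_two \<open>n - 2 \<in> R\<close> R(3) in \<open>auto simp: edges_complement_cycle_graph\<close>)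
  then show False
    using \<open>9 \<le> n\<close> by simp
qed

lemma not_k_2:
  assumes "k = 2" "2 dvd n - 3" "n \<noteq> 7"
  shows False
proof -
  have "card (K - {0, 2}) = 1"
    using card_rest assms(1) by simp
  then obtain a where rest_eq: "K - {0, 2} = {a}"
    by (auto simp: card_Suc_eq)
  then have K: "K = {0, 2, a}"
    using zero_two by auto
  have a: "4 \<le> a" "a \<le> n - 2"
    using rest[of a] rest_eq by auto
  then have "9 \<le> n"
    using assms(2,3) n by presburger
  define w where "w = (if 6 \<le> a then 4 else 7 :: nat)"
  have "card {0, 2, a} \<le> 2"
  proof (rule sparse)
    show "w \<notin> K"
      unfolding K w_def using a by auto
  qed (use \<open>9 \<le> n\<close> a K in \<open>auto simp: w_def edges_complement_cycle_graph\<close>)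
  then show False
    using a by simp
qed

end


lemma ex_complement_cycle_block:
  assumes G: "TS_like k (complement (cycle_graph n))" and n: "5 \<le> n"
  obtains K where "complement_cycle_block n k K"
proof -
  let ?G = "complement (cycle_graph n)"
  have "{0, 2} \<in> edges ?G"
    using n by (simp add: edges_complement_cycle_graph)
  then obtain K where K: "K \<in> cliques (Suc k) ?G" "0 \<in> K" "2 \<in> K"
    and nbrs: "\<And>z. z \<in> verts ?G - K \<Longrightarrow> card (neighbours ?G z \<inter> K) \<le> 2"
    using TS_like_obtain_block[OF G, of 0 2] n by auto
  have "complement_cycle_block n k K"
  proof
    show "4 \<le> a \<and> a \<le> n - 2" if "a \<in> K - {0, 2}" for a
    proof -
      have "{0, a} \<in> edges ?G" "{2, a} \<in> edges ?G"
        using K that by (auto simp: cliques_def)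
      then show ?thesis
        using that by (auto simp: edges_complement_cycle_graph)
    qed
    show "card S \<le> 2"
      if "z < n" "z \<notin> K" "S \<subseteq> K" "\<And>a. a \<in> S \<Longrightarrow> {z, a} \<in> edges ?G" for z S
      using card_le_2_if_adjacent_to_block[OF K(1) _ nbrs] that by auto
  qed (use n K in auto)
  then show thesis
    by (rule that)
qed

lemma not_TS_like_complement_cycle_graph:
  assumes n: "4 \<le> n" and k: "2 \<le> k"
  shows "\<not> TS_like k (complement (cycle_graph n))"
proof
  let ?G = "complement (cycle_graph n)"
  assume G: "TS_like k ?G"
  have "neighbours ?G 0 = {2..<n - 1}"
    using n by (auto simp: neighbours_def edges_complement_cycle_graph)
  then have dvd: "k dvd n - 3"
    using TS_like_dvd_degree[OF G, of 0] n by (simp add: degree_def numeral_3_eq_3)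
  then have "5 \<le> n"
    using n k by (cases "n = 4") auto
  then obtain K where "complement_cycle_block n k K"
    using ex_complement_cycle_block G by blast
  then interpret complement_cycle_block n k K .
  consider "k = 3" | "k = 2" "n = 7" | "k = 2" "n \<noteq> 7"
    using k_le_3 k by linarith
  then show False
    using complement_cycle_block.not_k_3 not_k_3 not_k_2 dvd G not_TS_like_complement_cycle_7
    by cases auto
qed

lemma KTS_complement_cycle_graph: "4 \<le> n \<Longrightarrow> KTS (complement (cycle_graph n)) = {1}"
  using not_TS_like_complement_cycle_graph
  by (intro KTS_eq_1I) (simp_all add: complement_cycle_graph is_graph_mk_graph)


lemma complement_friendship_graph:
  "complement (friendship_graph p) =
     mk_graph {0..2 * p} (\<lambda>u v. 0 < u \<and> 0 < v \<and> (u + 1) div 2 \<noteq> (v + 1) div 2)"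
proof -
  let ?R = "\<lambda>u v::nat. u = 0 \<or> v = 0 \<or> odd u \<and> v = u + 1 \<or> odd v \<and> u = v + 1"
    and ?S = "\<lambda>u v::nat. 0 < u \<and> 0 < v \<and> (u + 1) div 2 \<noteq> (v + 1) div 2"
  have "odd u \<and> v = u + 1 \<or> odd v \<and> u = v + 1 \<longleftrightarrow> (u + 1) div 2 = (v + 1) div 2"
    if "0 < u" "0 < v" "u \<noteq> v" for u v :: nat
    using that by presburger
  then have cong: "(\<not> ?R u v \<and> \<not> ?R v u) \<or> (\<not> ?R v u \<and> \<not> ?R u v) \<longleftrightarrow> ?S u v \<or> ?S v u"
    if "u \<noteq> v" for u v
    using that by (cases "u = 0 \<or> v = 0") auto
  show ?thesis
    unfolding friendship_graph_def complement_mk_graph by (intro mk_graph_cong) (rule cong)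
qed

lemma edges_complement_friendship_graph:
  "{u, v} \<in> edges (complement (friendship_graph p)) \<longleftrightarrow>
     u \<le> 2 * p \<and> v \<le> 2 * p \<and> 0 < u \<and> 0 < v \<and> (u + 1) div 2 \<noteq> (v + 1) div 2"
  by (auto simp: complement_friendship_graph edges_mk_graph)

lemma TS_like_complement_friendship_graph:
  assumes G: "TS_like k (complement (friendship_graph p))" and p: "2 \<le> p" and k: "2 \<le> k"
  shows "p = 3 \<and> k = 2"
proof -
  let ?G = "complement (friendship_graph p)" and ?pair = "\<lambda>x::nat. (x + 1) div 2"
  have "{1, 3} \<in> edges ?G"
    using p by (simp add: edges_complement_friendship_graph)
  then obtain K where K: "K \<in> cliques (Suc k) ?G" "1 \<in> K"
    and nbrs: "\<And>z. z \<in> verts ?G - K \<Longrightarrow> card (neighbours ?G z \<inter> K) \<le> 2"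
    using TS_like_obtain_block[OF G, of 1 3] p by (auto simp: complement_friendship_graph)
  have K_range: "0 < x \<and> x \<le> 2 * p" if "x \<in> K" for x
    using K that p by (cases "x = 1") (auto simp: cliques_def edges_complement_friendship_graph)
  have inj: "inj_on ?pair K"
    using K by (auto intro!: inj_onI simp: cliques_def edges_complement_friendship_graph)
  have card_K: "finite K" "card K = Suc k"
    using K by (simp_all add: cliques_def)
  have bound: "card S \<le> 2"
    if z: "0 < z" "z \<le> 2 * p" "z \<notin> K" and S: "S \<subseteq> K" "\<And>a. a \<in> S \<Longrightarrow> ?pair z \<noteq> ?pair a"
    for z S
  proof (rule card_le_2_if_adjacent_to_block[OF K(1)])
    show "z \<in> verts ?G - K"
      using z by (simp add: complement_friendship_graph)
    then show "card (neighbours ?G z \<inter> K) \<le> 2"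
      by (rule nbrs)
    show "{z, a} \<in> edges ?G" if "a \<in> S" for a
      using z S(2)[OF that] K_range[of a] S(1) that by (auto simp: edges_complement_friendship_graph)
  qed (rule S(1))
  have all_pairs: "?pair ` K = {1..p}"
  proof (rule ccontr)
    assume "?pair ` K \<noteq> {1..p}"
    moreover have "?pair ` K \<subseteq> {1..p}"
    proof
      fix i assume "i \<in> ?pair ` K"
      then obtain x where "x \<in> K" "i = ?pair x"
        by blast
      then show "i \<in> {1..p}"
        using K_range[of x] by simp presburger
    qed
    ultimately obtain i where i: "i \<in> {1..p}" "i \<notin> ?pair ` K"
      by blast
    then have "card K \<le> 2"
      using bound[of "2 * i - 1" K] by (force simp: image_iff)
    then show False
      using card_K k by simp
  qed
  then have "card K = p"
    using card_image[OF inj] by simp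
  moreover have "p \<le> 3"
  proof -
    have "2 \<notin> K"
      using inj_onD[OF inj, of 2 1] K(2) by auto
    moreover have "?pair 2 \<noteq> ?pair a" if "a \<in> K - {1}" for a
      using that inj_onD[OF inj, of a 1] K(2) by auto
    ultimately have "card (K - {1}) \<le> 2"
      using bound[of 2 "K - {1}"] p by auto
    then show ?thesis
      using card_K K(2) \<open>card K = p\<close> by simp
  qed
  ultimately show ?thesis
    using card_K k by simp
qed


lemma two_in_KTS_complement_friendship_graph_3: "2 \<in> KTS (complement (friendship_graph 3))"
proof -
  let ?G = "complement (friendship_graph 3)" and ?H = "cluster_graph {0..<6} (\<lambda>u::nat. u < 4)"
  define g :: "nat \<Rightarrow> nat set" where
    "g x = (if x = 0 then {4, 5} else if x = 1 then {0, 1} else if x = 2 then {2, 3}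
      else if x = 3 then {0, 2} else if x = 4 then {1, 3} else if x = 5 then {0, 3} else {1, 2})" for x
  have verts: "verts ?G = {0, 1, 2, 3, 4, 5, 6}"
    by (auto simp: complement_friendship_graph)
  have cliques: "cliques 2 ?H = {{4, 5}, {0, 1}, {2, 3}, {0, 2}, {1, 3}, {0, 3}, {1, 2}}"
  proof (intro equalityI subsetI)
    fix A assume "A \<in> cliques 2 ?H"
    then obtain a b where "A = {a, b}" "a \<noteq> b" "a < 6" "b < 6" "(a < 4) = (b < 4)"
      by (auto simp: cliques_cluster_graph card_2_iff)
    then show "A \<in> {{4, 5}, {0, 1}, {2, 3}, {0, 2}, {1, 3}, {0, 3}, {1, 2}}"
      by (auto simp: less_Suc_eq numeral_eq_Suc doubleton_eq_iff)
  next
    fix A assume "A \<in> {{4, 5}, {0, 1}, {2, 3}, {0, 2}, {1, 3}, {0, 3}, {1, 2 :: nat}}"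
    then show "A \<in> cliques 2 ?H"
      by (auto simp: cliques_def edges_cluster_graph)
  qed
  have "graph_isomorphism ?G (TS 2 ?H) g"
  proof
    show "bij_betw g (verts ?G) (verts (TS 2 ?H))"
      unfolding verts verts_TS cliques by (simp add: bij_betw_def g_def doubleton_eq_iff insert_commute)
    fix x y assume xy: "x \<in> verts ?G" "y \<in> verts ?G"
    show "{g x, g y} \<in> edges (TS 2 ?H) \<longleftrightarrow> {x, y} \<in> edges ?G"
    proof (cases "x = y")
      case True
      then show ?thesis
        by (simp add: singleton_notin_edges_TS complement_friendship_graph singleton_notin_edges_mk_graph)
    next
      case False
      with xy show ?thesis
        unfolding verts
        by (elim insertE emptyE)
          (simp_all add: g_def edges_TS cliques edges_cluster_graph edges_complement_friendship_graph
            doubleton_eq_iff insert_Diff_if)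
    qed
  qed
  then have "graph_iso (TS 2 ?H) ?G"
    using graph_isomorphism.inverse graph_iso_iff_isomorphism by blast
  then show ?thesis
    by (rule KTS_intro[OF is_graph_cluster_graph, rotated 2]) simp_all
qed


lemma KTS_complement_friendship_graph:
  assumes "2 \<le> p"
  shows "KTS (complement (friendship_graph p)) = (if p = 3 then {1, 2} else {1})"
proof -
  have G: "is_graph (complement (friendship_graph p))"
    by (simp add: complement_friendship_graph is_graph_mk_graph)
  have TS_like: "p = 3 \<and> k = 2" if "2 \<le> k" "TS_like k (complement (friendship_graph p))" for k
    using TS_like_complement_friendship_graph that assms by blast
  show ?thesis
  proof (cases "p = 3")
    case True
    have "k \<in> {1, 2}" if "k \<in> KTS (complement (friendship_graph p))" for k
      using that TS_like[OF _ KTS_imp_TS_like[OF that]] by (cases "2 \<le> k") (auto simp: KTS_def)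
    then show ?thesis
      using True one_in_KTS[OF G] two_in_KTS_complement_friendship_graph_3 by auto
  next
    case False
    then show ?thesis
      using KTS_eq_1I[OF G] TS_like by auto
  qed
qed

theorem theorem3p7:
  shows "(\<forall>n\<ge>2. KTS (complement (complete_graph n)) = {k. k \<ge> 1})
    \<and> (KTS (complement (complete_bipartite 1 1)) = {k. k \<ge> 1}
       \<and> (\<forall>n\<ge>2. KTS (complement (complete_bipartite 1 n)) = {1, n - 1}))
    \<and> (\<forall>m n. 2 \<le> m \<and> m \<le> n \<longrightarrow>
         KTS (complement (complete_bipartite m n)) = (if m = n then {1, n - 1} else {1}))
    \<and> (KTS (complement (book_graph 1)) = {k. k \<ge> 1}
       \<and> (\<forall>p\<ge>2. KTS (complement (book_graph p)) = {1, p - 1}))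
    \<and> (\<forall>n\<ge>3. KTS (complement (path_graph n)) = {1})
    \<and> (\<forall>n\<ge>4. KTS (complement (cycle_graph n)) = {1})
    \<and> (KTS (complement (friendship_graph 1)) = {k. k \<ge> 1}
       \<and> KTS (complement (friendship_graph 2)) = {1}
       \<and> KTS (complement (friendship_graph 3)) = {1, 2}
       \<and> (\<forall>p\<ge>4. KTS (complement (friendship_graph p)) = {1}))"
proof (intro conjI allI impI)
  show "KTS (complement (complete_graph n)) = {k. k \<ge> 1}" for n
    by (simp add: complement_complete_graph KTS_edgeless)
  show "KTS (complement (complete_bipartite 1 1)) = {k. k \<ge> 1}"
    by (auto simp: KTS_complement_complete_bipartite)
  show "KTS (complement (complete_bipartite 1 n)) = {1, n - 1}" if "n \<ge> 2" for n
    using that by (auto simp: KTS_complement_complete_bipartite)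
  show "KTS (complement (complete_bipartite m n)) = (if m = n then {1, n - 1} else {1})"
    if "2 \<le> m \<and> m \<le> n" for m n
    using that by (auto simp: KTS_complement_complete_bipartite)
  show "KTS (complement (book_graph 1)) = {k. k \<ge> 1}"
    by (auto simp: KTS_complement_book_graph)
  show "KTS (complement (book_graph p)) = {1, p - 1}" if "p \<ge> 2" for p
    using that by (auto simp: KTS_complement_book_graph)
  show "KTS (complement (path_graph n)) = {1}" if "n \<ge> 3" for n
    using that by (rule KTS_complement_path_graph)
  show "KTS (complement (cycle_graph n)) = {1}" if "n \<ge> 4" for n
    using that by (rule KTS_complement_cycle_graph)
  show "KTS (complement (friendship_graph 1)) = {k. k \<ge> 1}"
    unfolding complement_friendship_graph_1 by (rule KTS_edgeless) simp
  show "KTS (complement (friendship_graph 2)) = {1}"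
    using KTS_complement_friendship_graph[of 2] by simp
  show "KTS (complement (friendship_graph 3)) = {1, 2}"
    using KTS_complement_friendship_graph[of 3] by simp
  show "KTS (complement (friendship_graph p)) = {1}" if "p \<ge> 4" for p
    using that KTS_complement_friendship_graph[of p] by simp
qed

end
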